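(* Let a group $G$ act on a set $U$, and let $\mathcal{F}$ be a $G$-invariant family of finite subsets of $U$ whose cardinalities are uniformly bounded, i.e. $\max_{F\in\mathcal{F}}|F|<\infty$. Let $X\subseteq U$ be a finite system of representatives for $\mathcal{F}$, i.e. $X\cap F\neq\emptyset$ for every $F\in\mathcal{F}$. Then there exists a $G$-invariant system of representatives $Y\subseteq U$ for $\mathcal{F}$ (i.e. $gY=Y$ for all $g\in G$ and $Y\cap F\neq\emptyset$ for all $F\in\mathcal{F}$) such that $|Y|\le |X|\cdot\max_{F\in\mathcal{F}}|F|$.
   Context: A family $\mathcal{F}$ here is an unordered family, i.e. a set of subsets of $U$. It is $G$-invariant if $gF=\{gf\mid f\in F\}\in\mathcal{F}$ for all $g\in G$ and $F\in\mathcal{F}$. *)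

theory Defs
  imports "HOL-Algebra.Group_Action"
begin

end

theory Submission
  imports Defs
begin

(* Let k = max |F| and let Y be the set of rich points: the union of all finite G-orbits O
   with |O| <= k |O \<inter> X|.  Y is G-invariant, and summing over its orbits gives
   |Y| <= k |X|.  To see that Y meets a given F, note that every translate gF meets X.
   By B. H. Neumann's argument, elements of F with infinite orbit can be discarded: already
   the translates of the finite-orbit part F0 of F meet X.  On the finite union of the orbits
   through F0 the action factors through a finite group Q, and averaging |qF0 \<inter> X| >= 1
   over q \<in> Q with the orbit-stabiliser theorem yields some f \<in> F0 with
   |Gf| <= |F0| |Gf \<inter> X| <= k |Gf \<inter> X|, i.e. f \<in> Y. *)

lemma group_action_BijGroup: "group_action (BijGroup S) S (\<lambda>p. p)"
  unfolding group_action_def group_hom_def group_hom_axioms_def hom_def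
  by (simp add: group_BijGroup)

lemma card_Union_le_mult_card:
  assumes "finite \<A>" "pairwise disjnt \<A>" "finite X"
    and "\<And>A. A \<in> \<A> \<Longrightarrow> finite A \<and> card A \<le> k * card (A \<inter> X)"
  shows "card (\<Union>\<A>) \<le> k * card X"
proof -
  have "card (\<Union>\<A>) = (\<Sum>A\<in>\<A>. card A)"
    using assms(2,4) by (simp add: card_Union_disjoint)
  also have "\<dots> \<le> (\<Sum>A\<in>\<A>. k * card (A \<inter> X))"
    using assms(4) by (intro sum_mono) blast
  also have "\<dots> = k * (\<Sum>A\<in>\<A>. card (A \<inter> X))"
    by (simp add: sum_distrib_left)
  also have "(\<Sum>A\<in>\<A>. card (A \<inter> X)) = card (\<Union>A\<in>\<A>. A \<inter> X)"
    using assms(1-3) by (intro card_UN_disjoint[symmetric]) (auto simp: pairwise_def disjnt_def)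
  also have "k * \<dots> \<le> k * card X"
    using assms(3) by (intro mult_le_mono2 card_mono) auto
  finally show ?thesis .
qed

definition pointwise_stabilizer :: "('g, 'b) monoid_scheme \<Rightarrow> ('g \<Rightarrow> 'a \<Rightarrow> 'a) \<Rightarrow> 'a set \<Rightarrow> 'g set"
  where "pointwise_stabilizer G \<phi> \<Omega> = {g \<in> carrier G. \<forall>x\<in>\<Omega>. \<phi> g x = x}"

definition rich_points :: "('g, 'b) monoid_scheme \<Rightarrow> 'a set \<Rightarrow> ('g \<Rightarrow> 'a \<Rightarrow> 'a) \<Rightarrow> nat \<Rightarrow> 'a set \<Rightarrow> 'a set"
  where "rich_points G E \<phi> k X =
    {u\<in>E. finite (orbit G \<phi> u) \<and> card (orbit G \<phi> u) \<le> k * card (orbit G \<phi> u \<inter> X)}"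

sublocale group_action \<subseteq> group G
  using group_hom group_hom.axioms(1) by blast

context group_action
begin

lemma action_inv_cancel: "g \<in> carrier G \<Longrightarrow> x \<in> E \<Longrightarrow> \<phi> g (\<phi> (inv g) x) = x"
  using orbit_sym_aux[of "inv g" x] by simp

lemma orbit_subset: "x \<in> E \<Longrightarrow> orbit G \<phi> x \<subseteq> E"
  unfolding orbit_def using element_image by blast

lemma orbit_closed:
  assumes "g \<in> carrier G" "x \<in> E" "y \<in> orbit G \<phi> x"
  shows "\<phi> g y \<in> orbit G \<phi> x"
proof -
  obtain h where "h \<in> carrier G" "y = \<phi> h x"
    using assms(3) unfolding orbit_def by blast
  then have "\<phi> g y = \<phi> (g \<otimes> h) x"
    using assms composition_rule by simp
  then show ?thesis
    using assms(1) \<open>h \<in> carrier G\<close> unfolding orbit_def by blast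
qed

lemma orbit_eq:
  assumes "x \<in> E" "y \<in> orbit G \<phi> x"
  shows "orbit G \<phi> y = orbit G \<phi> x"
proof -
  have "y \<in> E" "x \<in> orbit G \<phi> y"
    using assms orbit_subset orbit_sym by blast+
  then show ?thesis
    using assms orbit_subset orbit_trans by blast
qed

lemma image_eq_if_orbit_closed:
  assumes "Y \<subseteq> E" "\<And>y. y \<in> Y \<Longrightarrow> orbit G \<phi> y \<subseteq> Y" "g \<in> carrier G"
  shows "\<phi> g ` Y = Y"
proof -
  have closed: "\<phi> h y \<in> Y" if "h \<in> carrier G" "y \<in> Y" for h y
    using assms(2)[OF that(2)] that(1) unfolding orbit_def by blast
  have "y \<in> \<phi> g ` Y" if y: "y \<in> Y" for y
  proof -
    have "y = \<phi> g (\<phi> (inv g) y)"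
      using action_inv_cancel[OF assms(3)] assms(1) y by auto
    then show ?thesis
      using closed[OF inv_closed[OF assms(3)] y] by blast
  qed
  then show ?thesis
    using closed assms(3) by blast
qed

section \<open>Neumann's lemma on translates meeting a finite set\<close>

lemma translates_meet_without_infinite_orbit:
  assumes "F \<subseteq> E" "finite X" "\<forall>g\<in>carrier G. \<phi> g ` F \<inter> X \<noteq> {}"
    and "f \<in> F" "infinite (orbit G \<phi> f)"
  shows "\<exists>X'. finite X' \<and> (\<forall>g\<in>carrier G. \<phi> g ` (F - {f}) \<inter> X' \<noteq> {})"
proof -
  have fE: "f \<in> E" using assms by blast
  have "\<not> orbit G \<phi> f \<subseteq> X"
    using assms(2,5) finite_subset by blast
  then obtain g0 where g0: "g0 \<in> carrier G" "\<phi> g0 f \<notin> X"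
    unfolding orbit_def by blast
  have "\<forall>x\<in>orbit G \<phi> f. \<exists>g. g \<in> carrier G \<and> \<phi> g f = x"
    unfolding orbit_def by blast
  then obtain a where a: "\<And>x. x \<in> orbit G \<phi> f \<Longrightarrow> a x \<in> carrier G \<and> \<phi> (a x) f = x"
    using bchoice by metis
  (* If h f = x \<in> X, then h = a x \<otimes> s with s fixing f.  Since g0 \<otimes> s moves f out of X,
     it maps some f' \<noteq> f into X, and then h f' \<in> \<phi> (a x) ` \<phi> (inv g0) ` X. *)
  define X' where "X' = X \<union> (\<Union>x\<in>X \<inter> orbit G \<phi> f. \<phi> (a x) ` \<phi> (inv g0) ` X)"
  have "\<phi> h ` (F - {f}) \<inter> X' \<noteq> {}" if h: "h \<in> carrier G" for h
  proof (cases "\<phi> h f \<in> X")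
    case False
    obtain f' where "f' \<in> F" "\<phi> h f' \<in> X"
      using assms(3) h by blast
    with False have "\<phi> h f' \<in> \<phi> h ` (F - {f}) \<inter> X'"
      unfolding X'_def by blast
    then show ?thesis by blast
  next
    case True
    define x where "x = \<phi> h f"
    have x: "x \<in> X \<inter> orbit G \<phi> f"
      using True h unfolding x_def orbit_def by blast
    then have ax: "a x \<in> carrier G" "\<phi> (a x) f = x"
      using a by blast+
    define s where "s = inv (a x) \<otimes> h"
    have s: "s \<in> carrier G" "h = a x \<otimes> s"
      using ax h by (simp_all add: s_def m_assoc[symmetric])
    have "\<phi> s f = \<phi> (inv (a x)) x"
      using composition_rule[of f "inv (a x)" h] fE ax h by (simp add: s_def x_def)
    also have "\<dots> = f"
      using orbit_sym_aux[OF ax(1) fE ax(2)] .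
    finally have "\<phi> (g0 \<otimes> s) f \<notin> X"
      using composition_rule[OF fE g0(1) s(1)] g0(2) by simp
    moreover obtain f' where f': "f' \<in> F" "\<phi> (g0 \<otimes> s) f' \<in> X"
      using assms(3) g0(1) s(1) by blast
    ultimately have "f' \<noteq> f" by blast
    have f'E: "f' \<in> E" "\<phi> s f' \<in> E"
      using f'(1) assms(1) element_image[OF s(1)] by blast+
    have "\<phi> (inv g0) (\<phi> (g0 \<otimes> s) f') = \<phi> s f'"
      using composition_rule[OF f'E(1) g0(1) s(1)] orbit_sym_aux[OF g0(1) f'E(2) refl] by simp
    then have "\<phi> h f' = \<phi> (a x) (\<phi> (inv g0) (\<phi> (g0 \<otimes> s) f'))"
      using composition_rule[OF f'E(1) ax(1) s(1)] s(2) by simp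
    then have "\<phi> h f' \<in> X'"
      using f'(2) x unfolding X'_def by blast
    then show ?thesis
      using f'(1) \<open>f' \<noteq> f\<close> by blast
  qed
  moreover have "finite X'"
    unfolding X'_def using assms(2) by blast
  ultimately show ?thesis by blast
qed

lemma finite_orbit_if_translates_meet:
  assumes "finite F" "F \<subseteq> E" "finite X" "\<forall>g\<in>carrier G. \<phi> g ` F \<inter> X \<noteq> {}"
  shows "\<exists>f\<in>F. finite (orbit G \<phi> f)"
  using assms
proof (induction F arbitrary: X rule: finite_psubset_induct)
  case (psubset F)
  obtain f where f: "f \<in> F"
    using psubset.prems(3)[rule_format, OF one_closed] by blast
  show ?case
  proof (cases "finite (orbit G \<phi> f)")
    case False
    then obtain X' where "finite X'" "\<forall>g\<in>carrier G. \<phi> g ` (F - {f}) \<inter> X' \<noteq> {}"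
      using translates_meet_without_infinite_orbit[OF psubset.prems f] by blast
    moreover have "F - {f} \<subset> F" "F - {f} \<subseteq> E"
      using f psubset.prems(1) by blast+
    ultimately show ?thesis
      using psubset.IH by blast
  qed (use f in blast)
qed

lemma subgroup_pointwise_stabilizer:
  assumes "\<Omega> \<subseteq> E"
  shows "subgroup (pointwise_stabilizer G \<phi> \<Omega>) G"
proof -
  have "pointwise_stabilizer G \<phi> \<Omega> = \<Inter>(insert (carrier G) (stabilizer G \<phi> ` \<Omega>))"
    by (auto simp: pointwise_stabilizer_def stabilizer_def)
  moreover have "subgroup H G" if "H \<in> insert (carrier G) (stabilizer G \<phi> ` \<Omega>)" for H
    using that assms subgroup_self stabilizer_subgroup by blast
  ultimately show ?thesis
    using subgroups_Inter by (metis insert_not_empty)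
qed

lemma finite_orbit_if_finite_pointwise_stabilizer_orbit:
  assumes "finite \<Omega>" "\<Omega> \<subseteq> E" "\<forall>g\<in>carrier G. \<phi> g ` \<Omega> \<subseteq> \<Omega>" "x \<in> E"
    and "finite (orbit (G\<lparr>carrier := pointwise_stabilizer G \<phi> \<Omega>\<rparr>) \<phi> x)"
  shows "finite (orbit G \<phi> x)"
proof -
  define N where "N = pointwise_stabilizer G \<phi> \<Omega>"
  define \<psi> where "\<psi> g = restrict (\<phi> g) \<Omega>" for g
  define rep where "rep = inv_into (carrier G) \<psi>"
  have "\<psi> ` carrier G \<subseteq> \<Omega> \<rightarrow>\<^sub>E \<Omega>"
    using assms(3) by (auto simp: \<psi>_def image_subset_iff)
  then have fin: "finite (\<psi> ` carrier G)"
    using finite_PiE[OF assms(1)] assms(1) finite_subset by metis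
  have "orbit G \<phi> x \<subseteq> (\<Union>q\<in>\<psi> ` carrier G. \<phi> (rep q) ` orbit (G\<lparr>carrier := N\<rparr>) \<phi> x)"
  proof
    fix y assume "y \<in> orbit G \<phi> x"
    then obtain g where g: "g \<in> carrier G" "y = \<phi> g x"
      unfolding orbit_def by blast
    define r where "r = rep (\<psi> g)"
    have r: "r \<in> carrier G" "\<psi> r = \<psi> g"
      using g(1) by (simp_all add: r_def rep_def inv_into_into f_inv_into_f)
    have "\<phi> (inv r \<otimes> g) w = w" if "w \<in> \<Omega>" for w
    proof -
      have "\<phi> r w = \<phi> g w"
        using fun_cong[OF r(2), of w] that by (simp add: \<psi>_def)
      then show ?thesis
        using composition_rule[of w "inv r" g] orbit_sym_aux[OF r(1), of w] that assms(2) g(1) r(1)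
        by auto
    qed
    then have "inv r \<otimes> g \<in> N"
      using g(1) r(1) by (simp add: N_def pointwise_stabilizer_def)
    moreover have "y = \<phi> r (\<phi> (inv r \<otimes> g) x)"
      using composition_rule[of x r "inv r \<otimes> g"] assms(4) g r(1) by (simp add: m_assoc[symmetric])
    ultimately show "y \<in> (\<Union>q\<in>\<psi> ` carrier G. \<phi> (rep q) ` orbit (G\<lparr>carrier := N\<rparr>) \<phi> x)"
      using g(1) unfolding r_def orbit_def by auto
  qed
  then show ?thesis
    using fin assms(5) finite_subset unfolding N_def by blast
qed

lemma Union_finite_orbits:
  assumes "finite F" "F \<subseteq> E" "\<forall>f\<in>F. finite (orbit G \<phi> f)"
  defines "\<Omega> \<equiv> \<Union>f\<in>F. orbit G \<phi> f"
  shows "finite \<Omega>" "\<Omega> \<subseteq> E" "\<forall>g\<in>carrier G. \<phi> g ` \<Omega> \<subseteq> \<Omega>" "F \<subseteq> \<Omega>"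
proof -
  have "\<phi> g y \<in> \<Omega>" if "g \<in> carrier G" "y \<in> \<Omega>" for g y
    using that assms(2) orbit_closed unfolding \<Omega>_def by blast
  then show "\<forall>g\<in>carrier G. \<phi> g ` \<Omega> \<subseteq> \<Omega>"
    by blast
  show "finite \<Omega>" "\<Omega> \<subseteq> E"
    using assms(1-3) orbit_subset unfolding \<Omega>_def by auto
  show "F \<subseteq> \<Omega>"
    using assms(2) orbit_refl unfolding \<Omega>_def by blast
qed

lemma translate_meets_outside_fixed_part:
  assumes "F \<subseteq> E" "\<forall>g\<in>carrier G. \<phi> g ` F \<inter> X \<noteq> {}"
    and "g1 \<in> carrier G" "\<phi> g1 ` A \<inter> X = {}" "n \<in> pointwise_stabilizer G \<phi> A"
  shows "\<phi> n ` (F - A) \<inter> \<phi> (inv g1) ` X \<noteq> {}"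
proof -
  have n: "n \<in> carrier G" "\<forall>x\<in>A. \<phi> n x = x"
    using assms(5) by (simp_all add: pointwise_stabilizer_def)
  have "\<phi> (g1 \<otimes> n) ` F \<inter> X \<noteq> {}"
    using assms(2,3) n(1) by simp
  then obtain f where f: "f \<in> F" "\<phi> (g1 \<otimes> n) f \<in> X"
    by blast
  have fE: "f \<in> E" "\<phi> n f \<in> E"
    using f(1) assms(1) element_image[OF n(1)] by blast+
  have act: "\<phi> (g1 \<otimes> n) f = \<phi> g1 (\<phi> n f)"
    using composition_rule[OF fE(1) assms(3) n(1)] .
  have "f \<notin> A"
  proof
    assume "f \<in> A"
    then have "\<phi> g1 f \<in> \<phi> g1 ` A \<inter> X"
      using f(2) act n(2) by simp
    then show False
      using assms(4) by blast
  qed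
  then have "\<phi> n f \<in> \<phi> n ` (F - A)"
    using f(1) by blast
  moreover have "\<phi> n f = \<phi> (inv g1) (\<phi> (g1 \<otimes> n) f)"
    using act orbit_sym_aux[OF assms(3) fE(2) refl] by simp
  then have "\<phi> n f \<in> \<phi> (inv g1) ` X"
    using f(2) by blast
  ultimately show ?thesis by blast
qed

lemma translates_of_finite_orbit_part_meet:
  assumes "finite F" "F \<subseteq> E" "finite X" "\<forall>g\<in>carrier G. \<phi> g ` F \<inter> X \<noteq> {}"
  shows "\<forall>g\<in>carrier G. \<phi> g ` {f\<in>F. finite (orbit G \<phi> f)} \<inter> X \<noteq> {}"
proof (rule ccontr)
  define F0 where "F0 = {f\<in>F. finite (orbit G \<phi> f)}"
  define \<Omega> where "\<Omega> = (\<Union>f\<in>F0. orbit G \<phi> f)"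
  define N where "N = pointwise_stabilizer G \<phi> \<Omega>"
  assume "\<not> (\<forall>g\<in>carrier G. \<phi> g ` {f\<in>F. finite (orbit G \<phi> f)} \<inter> X \<noteq> {})"
  then obtain g1 where g1: "g1 \<in> carrier G" "\<phi> g1 ` F0 \<inter> X = {}"
    unfolding F0_def by blast
  have "finite F0" "F0 \<subseteq> E" "\<forall>f\<in>F0. finite (orbit G \<phi> f)"
    using assms(1,2) by (auto simp: F0_def)
  note \<Omega> = Union_finite_orbits[OF this, folded \<Omega>_def]
  (* Neumann's lemma for the finite-index subgroup N, which fixes F0 pointwise, yields an
     element outside F0 with finite N-orbit, hence with finite G-orbit. *)
  have "n \<in> pointwise_stabilizer G \<phi> F0" if "n \<in> N" for n
    using that \<Omega>(4) by (auto simp: N_def pointwise_stabilizer_def)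
  then have "\<phi> n ` (F - F0) \<inter> \<phi> (inv g1) ` X \<noteq> {}" if "n \<in> N" for n
    using translate_meets_outside_fixed_part[OF assms(2,4) g1] that by blast
  moreover have "finite (F - F0)" "F - F0 \<subseteq> E" "finite (\<phi> (inv g1) ` X)"
    using assms(1-3) by auto
  moreover have "group_action (G\<lparr>carrier := N\<rparr>) E \<phi>"
    unfolding N_def using induced_action subgroup_pointwise_stabilizer \<Omega>(2) by blast
  ultimately have "\<exists>f\<in>F - F0. finite (orbit (G\<lparr>carrier := N\<rparr>) \<phi> f)"
    using group_action.finite_orbit_if_translates_meet[of "G\<lparr>carrier := N\<rparr>" E \<phi> "F - F0" "\<phi> (inv g1) ` X"]
    by simp
  then obtain f where f: "f \<in> F - F0" "finite (orbit (G\<lparr>carrier := N\<rparr>) \<phi> f)" ..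
  moreover have "f \<in> E"
    using f(1) assms(2) by blast
  ultimately have "finite (orbit G \<phi> f)"
    using finite_orbit_if_finite_pointwise_stabilizer_orbit[OF \<Omega>(1-3)] unfolding N_def by blast
  then show False
    using f(1) by (simp add: F0_def)
qed

section \<open>Averaging over a finite permutation group\<close>

lemma restrict_group_action:
  assumes "\<Omega> \<subseteq> E" "\<forall>g\<in>carrier G. \<phi> g ` \<Omega> \<subseteq> \<Omega>"
  shows "group_action G \<Omega> (\<lambda>g. restrict (\<phi> g) \<Omega>)"
proof -
  have closed: "\<phi> g x \<in> \<Omega>" if "g \<in> carrier G" "x \<in> \<Omega>" for g x
    using assms(2) that by blast
  have Bij: "restrict (\<phi> g) \<Omega> \<in> Bij \<Omega>" if g: "g \<in> carrier G" for g
  proof -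
    have "x \<in> \<phi> g ` \<Omega>" if "x \<in> \<Omega>" for x
      using action_inv_cancel[OF g, of x] closed[OF inv_closed[OF g] that] that assms(1) by force
    then have "\<phi> g ` \<Omega> = \<Omega>"
      using closed g by blast
    moreover have "inj_on (\<phi> g) \<Omega>"
      using inj_prop[OF g] assms(1) inj_on_subset by blast
    ultimately show ?thesis
      by (simp add: Bij_def bij_betw_def)
  qed
  have "restrict (\<phi> (g \<otimes> h)) \<Omega> = restrict (\<phi> g) \<Omega> \<otimes>\<^bsub>BijGroup \<Omega>\<^esub> restrict (\<phi> h) \<Omega>"
    if "g \<in> carrier G" "h \<in> carrier G" for g h
    using that Bij closed assms(1) composition_rule
    by (auto simp: BijGroup_def compose_def fun_eq_iff)
  then show ?thesis
    using Bij group_BijGroup is_group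
    unfolding group_action_def group_hom_def group_hom_axioms_def hom_def
    by (auto simp: BijGroup_def)
qed

lemma finite_permutation_image:
  assumes "finite \<Omega>" "\<Omega> \<subseteq> E" "\<forall>g\<in>carrier G. \<phi> g ` \<Omega> \<subseteq> \<Omega>"
  obtains P where "group_action (P :: (_ \<Rightarrow> _) monoid) \<Omega> (\<lambda>p. p)" "finite (carrier P)"
    "\<And>x. x \<in> \<Omega> \<Longrightarrow> orbit P (\<lambda>p. p) x = orbit G \<phi> x"
    "\<And>p. p \<in> carrier P \<Longrightarrow> \<exists>g\<in>carrier G. \<forall>x\<in>\<Omega>. p x = \<phi> g x"
proof -
  define \<psi> where "\<psi> g = restrict (\<phi> g) \<Omega>" for g
  define P where "P = BijGroup \<Omega>\<lparr>carrier := \<psi> ` carrier G\<rparr>"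
  have "subgroup (\<psi> ` carrier G) (BijGroup \<Omega>)"
    using restrict_group_action[OF assms(2,3)] group_hom.img_is_subgroup
    unfolding group_action_def \<psi>_def by blast
  then have "group_action P \<Omega> (\<lambda>p. p)"
    unfolding P_def by (rule group_action.induced_action[OF group_action_BijGroup])
  moreover have "carrier P \<subseteq> \<Omega> \<rightarrow>\<^sub>E \<Omega>"
    using assms(3) by (auto simp: P_def \<psi>_def image_subset_iff)
  then have "finite (carrier P)"
    using finite_PiE[OF assms(1)] assms(1) finite_subset by metis
  moreover have "orbit P (\<lambda>p. p) x = orbit G \<phi> x" if "x \<in> \<Omega>" for x
    using that by (auto simp: orbit_def P_def \<psi>_def) (metis image_eqI restrict_apply')
  moreover have "\<exists>g\<in>carrier G. \<forall>x\<in>\<Omega>. p x = \<phi> g x" if "p \<in> carrier P" for p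
    using that by (auto simp: P_def \<psi>_def)
  ultimately show thesis
    by (rule that)
qed

lemma card_fibre_eq_card_stabilizer:
  assumes "x \<in> E" "y \<in> orbit G \<phi> x"
  shows "card {g\<in>carrier G. \<phi> g x = y} = card (stabilizer G \<phi> x)"
proof -
  obtain a where a: "a \<in> carrier G" "\<phi> a x = y"
    using assms(2) unfolding orbit_def by blast
  have "{g\<in>carrier G. \<phi> g x = y} = (\<lambda>h. a \<otimes> h) ` stabilizer G \<phi> x"
  proof
    have "\<phi> (a \<otimes> h) x = y" if "h \<in> stabilizer G \<phi> x" for h
      using that a composition_rule[OF assms(1) a(1)] by (simp add: stabilizer_def)
    then show "(\<lambda>h. a \<otimes> h) ` stabilizer G \<phi> x \<subseteq> {g\<in>carrier G. \<phi> g x = y}"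
      using a(1) stabilizer_subset by auto
    show "{g\<in>carrier G. \<phi> g x = y} \<subseteq> (\<lambda>h. a \<otimes> h) ` stabilizer G \<phi> x"
    proof
      fix g assume g: "g \<in> {g\<in>carrier G. \<phi> g x = y}"
      then have "\<phi> (inv a \<otimes> g) x = x"
        using a composition_rule[OF assms(1) inv_closed[OF a(1)]] orbit_sym_aux[OF a(1) assms(1)]
        by simp
      then have "inv a \<otimes> g \<in> stabilizer G \<phi> x"
        using a g by (simp add: stabilizer_def)
      moreover have "g = a \<otimes> (inv a \<otimes> g)"
        using a g by (simp add: m_assoc[symmetric])
      ultimately show "g \<in> (\<lambda>h. a \<otimes> h) ` stabilizer G \<phi> x"
        by blast
    qed
  qed
  moreover have "inj_on (\<lambda>h. a \<otimes> h) (stabilizer G \<phi> x)"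
    using inj_on_cmult[OF a(1)] stabilizer_subset inj_on_subset by blast
  ultimately show ?thesis
    by (simp add: card_image)
qed

lemma card_mapping_into:
  assumes "finite (carrier G)" "x \<in> E"
  shows "card {g\<in>carrier G. \<phi> g x \<in> S} = card (orbit G \<phi> x \<inter> S) * card (stabilizer G \<phi> x)"
proof -
  define T where "T y = {g\<in>carrier G. \<phi> g x = y}" for y
  have "orbit G \<phi> x = (\<lambda>g. \<phi> g x) ` carrier G"
    by (auto simp: orbit_def)
  then have "finite (orbit G \<phi> x \<inter> S)"
    using assms(1) by simp
  then have "card (\<Union>y\<in>orbit G \<phi> x \<inter> S. T y) = (\<Sum>y\<in>orbit G \<phi> x \<inter> S. card (T y))"
    by (rule card_UN_disjoint) (auto simp: T_def assms(1))
  moreover have "{g\<in>carrier G. \<phi> g x \<in> S} = (\<Union>y\<in>orbit G \<phi> x \<inter> S. T y)"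
    by (auto simp: T_def orbit_def)
  ultimately have "card {g\<in>carrier G. \<phi> g x \<in> S} = (\<Sum>y\<in>orbit G \<phi> x \<inter> S. card (T y))"
    by simp
  also have "\<dots> = card (orbit G \<phi> x \<inter> S) * card (stabilizer G \<phi> x)"
    using card_fibre_eq_card_stabilizer[OF assms(2)] by (simp add: T_def)
  finally show ?thesis .
qed

lemma ex_card_orbit_le_card_mult_card_Int:
  assumes "finite (carrier G)" "finite F" "F \<subseteq> E" "\<forall>g\<in>carrier G. \<phi> g ` F \<inter> X \<noteq> {}"
  shows "\<exists>f\<in>F. card (orbit G \<phi> f) \<le> card F * card (orbit G \<phi> f \<inter> X)"
proof (rule ccontr)
  assume "\<not> (\<exists>f\<in>F. card (orbit G \<phi> f) \<le> card F * card (orbit G \<phi> f \<inter> X))"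
  then have less: "card F * card (orbit G \<phi> f \<inter> X) < card (orbit G \<phi> f)" if f: "f \<in> F" for f
    using f by auto
  have hits: "card F * card {g\<in>carrier G. \<phi> g f \<in> X} < order G" if f: "f \<in> F" for f
  proof -
    have fE: "f \<in> E"
      using f assms(3) by blast
    have "0 < card (stabilizer G \<phi> f)"
      using assms(1) stabilizer_subset stabilizer_one_closed[OF fE] finite_subset card_gt_0_iff
      by (metis empty_iff)
    then have "card F * card {g\<in>carrier G. \<phi> g f \<in> X}
        < card (orbit G \<phi> f) * card (stabilizer G \<phi> f)"
      using card_mapping_into[OF assms(1) fE] less[OF f] by simp
    then show ?thesis
      using orbit_stabilizer_theorem[OF fE] by simp
  qed
  have "F \<noteq> {}"
    using assms(4) by blast
  then have "(\<Sum>f\<in>F. card F * card {g\<in>carrier G. \<phi> g f \<in> X}) < (\<Sum>f\<in>F. order G)"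
    using assms(2) hits by (intro sum_strict_mono)
  also have "\<dots> = card F * (\<Sum>g\<in>carrier G. 1)"
    by (simp add: order_def)
  also have "\<dots> \<le> card F * (\<Sum>g\<in>carrier G. card {f\<in>F. \<phi> g f \<in> X})"
  proof -
    have "(\<Sum>g\<in>carrier G. 1) \<le> (\<Sum>g\<in>carrier G. card {f\<in>F. \<phi> g f \<in> X})"
      using assms(2,4) by (intro sum_mono) (auto simp: Suc_le_eq card_gt_0_iff)
    then show ?thesis
      by (rule mult_le_mono2)
  qed
  also have "\<dots> = (\<Sum>f\<in>F. card F * card {g\<in>carrier G. \<phi> g f \<in> X})"
    using sum_multicount_gen[OF assms(1,2), of "\<lambda>g f. \<phi> g f \<in> X" "\<lambda>f. card {g\<in>carrier G. \<phi> g f \<in> X}"]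
    by (simp add: sum_distrib_left)
  finally show False
    by simp
qed

lemma ex_card_orbit_le_card_mult_card_Int_if_finite_orbits:
  assumes "finite F" "F \<subseteq> E" "\<forall>f\<in>F. finite (orbit G \<phi> f)"
    and "\<forall>g\<in>carrier G. \<phi> g ` F \<inter> X \<noteq> {}"
  shows "\<exists>f\<in>F. card (orbit G \<phi> f) \<le> card F * card (orbit G \<phi> f \<inter> X)"
proof -
  define \<Omega> where "\<Omega> = (\<Union>f\<in>F. orbit G \<phi> f)"
  note \<Omega> = Union_finite_orbits[OF assms(1-3), folded \<Omega>_def]
  obtain P where P: "group_action (P :: (_ \<Rightarrow> _) monoid) \<Omega> (\<lambda>p. p)" "finite (carrier P)"
    and orbit_P: "\<And>x. x \<in> \<Omega> \<Longrightarrow> orbit P (\<lambda>p. p) x = orbit G \<phi> x"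
    and from_G: "\<And>p. p \<in> carrier P \<Longrightarrow> \<exists>g\<in>carrier G. \<forall>x\<in>\<Omega>. p x = \<phi> g x"
    by (erule finite_permutation_image[OF \<Omega>(1-3)])
  have "\<forall>p\<in>carrier P. p ` F \<inter> X \<noteq> {}"
  proof
    fix p assume p: "p \<in> carrier P"
    obtain g where g: "g \<in> carrier G" "\<forall>x\<in>\<Omega>. p x = \<phi> g x"
      using from_G[OF p] by blast
    then have "p ` F = \<phi> g ` F"
      using \<Omega>(4) by (simp add: subset_iff cong: image_cong)
    then show "p ` F \<inter> X \<noteq> {}"
      using assms(4) g(1) by simp
  qed
  then obtain f where "f \<in> F" "card (orbit P (\<lambda>p. p) f) \<le> card F * card (orbit P (\<lambda>p. p) f \<inter> X)"
    using group_action.ex_card_orbit_le_card_mult_card_Int[OF P assms(1) \<Omega>(4)] by auto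
  moreover have "orbit P (\<lambda>p. p) f = orbit G \<phi> f"
    using orbit_P \<Omega>(4) \<open>f \<in> F\<close> by blast
  ultimately show ?thesis
    by auto
qed

lemma ex_finite_orbit_card_le_mult_card_Int:
  assumes "finite F" "F \<subseteq> E" "finite X" "\<forall>g\<in>carrier G. \<phi> g ` F \<inter> X \<noteq> {}" "card F \<le> k"
  shows "\<exists>f\<in>F. finite (orbit G \<phi> f) \<and> card (orbit G \<phi> f) \<le> k * card (orbit G \<phi> f \<inter> X)"
proof -
  define F0 where "F0 = {f\<in>F. finite (orbit G \<phi> f)}"
  have F0: "finite F0" "F0 \<subseteq> E" "\<forall>f\<in>F0. finite (orbit G \<phi> f)" "card F0 \<le> k"
    using assms(1,2,5) card_mono[OF assms(1), of F0] by (auto simp: F0_def)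
  have "\<forall>g\<in>carrier G. \<phi> g ` F0 \<inter> X \<noteq> {}"
    using translates_of_finite_orbit_part_meet[OF assms(1-4)] by (simp add: F0_def)
  then obtain f where f: "f \<in> F0" "card (orbit G \<phi> f) \<le> card F0 * card (orbit G \<phi> f \<inter> X)"
    using ex_card_orbit_le_card_mult_card_Int_if_finite_orbits[OF F0(1-3)] by blast
  then have "card (orbit G \<phi> f) \<le> k * card (orbit G \<phi> f \<inter> X)"
    using F0(4) mult_le_mono1 order_trans by blast
  then show ?thesis
    using f(1) by (auto simp: F0_def)
qed

section \<open>Rich points\<close>

lemma rich_points_orbit_closed:
  assumes "y \<in> rich_points G E \<phi> k X"
  shows "orbit G \<phi> y \<subseteq> rich_points G E \<phi> k X"
proof
  fix z assume z: "z \<in> orbit G \<phi> y"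
  have "y \<in> E"
    using assms by (simp add: rich_points_def)
  then have "z \<in> E" "orbit G \<phi> z = orbit G \<phi> y"
    using z orbit_subset orbit_eq by blast+
  then show "z \<in> rich_points G E \<phi> k X"
    using assms by (simp add: rich_points_def)
qed

lemma rich_points_invariant:
  assumes "g \<in> carrier G"
  shows "\<phi> g ` rich_points G E \<phi> k X = rich_points G E \<phi> k X"
proof -
  have "rich_points G E \<phi> k X \<subseteq> E"
    by (auto simp: rich_points_def)
  then show ?thesis
    using image_eq_if_orbit_closed[OF _ rich_points_orbit_closed assms] by blast
qed

lemma rich_points_meet:
  assumes "finite F" "F \<subseteq> E" "finite X" "\<forall>g\<in>carrier G. \<phi> g ` F \<inter> X \<noteq> {}" "card F \<le> k"
  shows "rich_points G E \<phi> k X \<inter> F \<noteq> {}"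
proof -
  obtain f where "f \<in> F" "finite (orbit G \<phi> f)" "card (orbit G \<phi> f) \<le> k * card (orbit G \<phi> f \<inter> X)"
    using ex_finite_orbit_card_le_mult_card_Int[OF assms] by blast
  then have "f \<in> rich_points G E \<phi> k X \<inter> F"
    using assms(2) by (auto simp: rich_points_def)
  then show ?thesis
    by blast
qed

lemma finite_card_rich_points:
  assumes "finite X"
  shows "finite (rich_points G E \<phi> k X)" "card (rich_points G E \<phi> k X) \<le> k * card X"
proof -
  define Y where "Y = rich_points G E \<phi> k X"
  have Y_sub: "Y \<subseteq> E"
    by (auto simp: Y_def rich_points_def)
  have bounded: "finite (orbit G \<phi> y) \<and> card (orbit G \<phi> y) \<le> k * card (orbit G \<phi> y \<inter> X)"
    if "y \<in> Y" for y
    using that by (simp add: Y_def rich_points_def)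
  have meets: "orbit G \<phi> y \<inter> X \<noteq> {}" if y: "y \<in> Y" for y
  proof -
    have "0 < card (orbit G \<phi> y)"
      using Y_sub bounded y orbit_refl card_gt_0_iff by blast
    then show ?thesis
      using bounded[OF y] by auto
  qed
  have "orbit G \<phi> ` Y \<subseteq> orbit G \<phi> ` X"
  proof
    fix A assume "A \<in> orbit G \<phi> ` Y"
    then obtain y where y: "y \<in> Y" "A = orbit G \<phi> y" by blast
    then obtain x where "x \<in> orbit G \<phi> y" "x \<in> X"
      using meets by blast
    then show "A \<in> orbit G \<phi> ` X"
      using orbit_eq[of y x] y Y_sub by blast
  qed
  then have fin: "finite (orbit G \<phi> ` Y)"
    using assms finite_surj by blast
  have "Y \<subseteq> \<Union>(orbit G \<phi> ` Y)"
    using Y_sub orbit_refl by blast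
  moreover have "\<Union>(orbit G \<phi> ` Y) \<subseteq> Y"
    using rich_points_orbit_closed unfolding Y_def by blast
  ultimately have Y: "Y = \<Union>(orbit G \<phi> ` Y)"
    by blast
  have "pairwise disjnt (orbit G \<phi> ` Y)"
  proof (rule pairwiseI)
    fix A B assume A: "A \<in> orbit G \<phi> ` Y" and B: "B \<in> orbit G \<phi> ` Y" and "A \<noteq> B"
    show "disjnt A B"
    proof (rule ccontr)
      assume "\<not> disjnt A B"
      then obtain z where "z \<in> A" "z \<in> B"
        by (auto simp: disjnt_def)
      then have "A = orbit G \<phi> z" "B = orbit G \<phi> z"
        using A B Y_sub orbit_eq by blast+
      then show False
        using \<open>A \<noteq> B\<close> by simp
    qed
  qed
  have "finite (\<Union>(orbit G \<phi> ` Y))"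
    using fin bounded by auto
  then show "finite (rich_points G E \<phi> k X)"
    using Y by (simp add: Y_def)
  show "card (rich_points G E \<phi> k X) \<le> k * card X"
    using card_Union_le_mult_card[OF fin \<open>pairwise disjnt _\<close> assms] bounded Y
    by (auto simp: Y_def)
qed

end

theorem mainTheorem1:
  fixes G :: "('g, 'b) monoid_scheme" and U :: "'a set" and \<phi> :: "'g \<Rightarrow> 'a \<Rightarrow> 'a"
    and \<F> :: "'a set set" and X :: "'a set"
  assumes act: "group_action G U \<phi>"
    and fam_sub: "\<forall>F\<in>\<F>. F \<subseteq> U"
    and fam_fin: "\<forall>F\<in>\<F>. finite F"
    and fam_inv: "\<forall>g\<in>carrier G. \<forall>F\<in>\<F>. \<phi> g ` F \<in> \<F>"
    and bounded: "\<exists>k::nat. \<forall>F\<in>\<F>. card F \<le> k"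
    and X_sub: "X \<subseteq> U" and X_fin: "finite X"
    and X_rep: "\<forall>F\<in>\<F>. X \<inter> F \<noteq> {}"
  shows "\<exists>Y. Y \<subseteq> U \<and> (\<forall>g\<in>carrier G. \<phi> g ` Y = Y)
             \<and> (\<forall>F\<in>\<F>. Y \<inter> F \<noteq> {})
             \<and> finite Y \<and> card Y \<le> card X * (SUP F\<in>\<F>. card F)"
proof -
  interpret group_action G U \<phi> by (rule act)
  define k where "k = (SUP F\<in>\<F>. card F)"
  define Y where "Y = rich_points G U \<phi> k X"
  have "Y \<inter> F \<noteq> {}" if F: "F \<in> \<F>" for F
  proof -
    have "\<forall>g\<in>carrier G. \<phi> g ` F \<inter> X \<noteq> {}"
      using fam_inv X_rep F by blast
    moreover have "card F \<le> k"
      using bounded F unfolding k_def by (intro cSUP_upper) (auto simp: bdd_above_def)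
    ultimately show ?thesis
      using rich_points_meet[OF fam_fin[rule_format, OF F] fam_sub[rule_format, OF F] X_fin]
      unfolding Y_def by blast
  qed
  moreover have "Y \<subseteq> U"
    by (auto simp: Y_def rich_points_def)
  moreover have "\<forall>g\<in>carrier G. \<phi> g ` Y = Y"
    using rich_points_invariant unfolding Y_def by blast
  moreover have "finite Y" "card Y \<le> card X * k"
    using finite_card_rich_points[OF X_fin] unfolding Y_def by (simp_all add: mult.commute)
  ultimately show ?thesis
    unfolding k_def by blast
qed

end
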